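(* Let $d\sigma^2$ be an admissible positive semi-definite metric on a $2$-manifold $M^2$ and let $p$ be an intrinsic cross cap of $d\sigma^2$. Then $p$ is an isolated singular point of $d\sigma^2$, and the null space $\mathcal{N}_p$ is one-dimensional.
   Context: For a smooth positive semi-definite metric $d\sigma^2$ with $\langle\cdot,\cdot\rangle=d\sigma^2$: singular points are where it is not positive definite; $\mathcal{N}_p=\{v\in T_pM^2: d\sigma^2(v,w)=0\ \forall w\}$; the Kossowski pseudo-connection is $\Gamma(X,Y,Z)=\tfrac12\bigl(X\langle Y,Z\rangle+Y\langle X,Z\rangle-Z\langle X,Y\rangle+\langle[X,Y],Z\rangle-\langle[X,Z],Y\rangle-\langle[Y,Z],X\rangle\bigr)$; admissible: at each singular point $p$, $\Gamma(V_1,V_2,V_3)(p)=0$ whenever $V_3(p)\in\mathcal{N}_p$. A singular point $p$ of an admissible metric is an intrinsic cross cap if, in a local coordinate system $(u,v)$ centered at $p$ with $d\sigma^2=E\,du^2+2F\,du\,dv+G\,dv^2$ and $\delta:=EG-F^2$, the Hessian determinant $\delta_{uu}\delta_{vv}-\delta_{uv}^2$ does not vanish at $p$ (this is independent of the coordinates). *)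

theory Defs
  imports "HOL-Analysis.Analysis"
begin

text \<open>Everything is expressed in a local coordinate chart (u,v) ranging over an open set
  U of the plane; points are pairs (u,v) :: real \<times> real.\<close>

fun C_k_on :: "nat \<Rightarrow> (real \<times> real) set \<Rightarrow> (real \<times> real \<Rightarrow> 'b::real_normed_vector) \<Rightarrow> bool" where
  "C_k_on 0 U f = continuous_on U f"
| "C_k_on (Suc k) U f = (f differentiable_on U \<and>
      (\<forall>w. C_k_on k U (\<lambda>q. frechet_derivative f (at q) w)))"

definition smooth_on :: "(real \<times> real) set \<Rightarrow> (real \<times> real \<Rightarrow> 'b::real_normed_vector) \<Rightarrow> bool" where
  "smooth_on U f \<longleftrightarrow> (\<forall>k. C_k_on k U f)"

definition metric_form ::
  "(real \<times> real \<Rightarrow> real) \<Rightarrow> (real \<times> real \<Rightarrow> real) \<Rightarrow> (real \<times> real \<Rightarrow> real)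
   \<Rightarrow> real \<times> real \<Rightarrow> real \<times> real \<Rightarrow> real \<times> real \<Rightarrow> real" where
  "metric_form E F G q x y =
     E q * fst x * fst y + F q * (fst x * snd y + snd x * fst y) + G q * snd x * snd y"

definition smooth_psd_metric ::
  "(real \<times> real) set \<Rightarrow> (real \<times> real \<Rightarrow> real) \<Rightarrow> (real \<times> real \<Rightarrow> real) \<Rightarrow> (real \<times> real \<Rightarrow> real) \<Rightarrow> bool" where
  "smooth_psd_metric U E F G \<longleftrightarrow> open U \<and> smooth_on U E \<and> smooth_on U F \<and> smooth_on U G \<and>
     (\<forall>q\<in>U. \<forall>w. metric_form E F G q w w \<ge> 0)"

definition singular_point ::
  "(real \<times> real \<Rightarrow> real) \<Rightarrow> (real \<times> real \<Rightarrow> real) \<Rightarrow> (real \<times> real \<Rightarrow> real) \<Rightarrow> real \<times> real \<Rightarrow> bool" where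
  "singular_point E F G q \<longleftrightarrow> \<not> (\<forall>w. w \<noteq> 0 \<longrightarrow> metric_form E F G q w w > 0)"

definition null_space ::
  "(real \<times> real \<Rightarrow> real) \<Rightarrow> (real \<times> real \<Rightarrow> real) \<Rightarrow> (real \<times> real \<Rightarrow> real) \<Rightarrow> real \<times> real \<Rightarrow> (real \<times> real) set" where
  "null_space E F G q = {v. \<forall>w. metric_form E F G q v w = 0}"

definition dirderiv :: "(real \<times> real \<Rightarrow> real \<times> real) \<Rightarrow> (real \<times> real \<Rightarrow> real) \<Rightarrow> real \<times> real \<Rightarrow> real" where
  "dirderiv X h p = frechet_derivative h (at p) (X p)"

definition lie_bracket ::
  "(real \<times> real \<Rightarrow> real \<times> real) \<Rightarrow> (real \<times> real \<Rightarrow> real \<times> real) \<Rightarrow> real \<times> real \<Rightarrow> real \<times> real" where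
  "lie_bracket X Y p = frechet_derivative Y (at p) (X p) - frechet_derivative X (at p) (Y p)"

definition kossowski ::
  "(real \<times> real \<Rightarrow> real) \<Rightarrow> (real \<times> real \<Rightarrow> real) \<Rightarrow> (real \<times> real \<Rightarrow> real) \<Rightarrow>
   (real \<times> real \<Rightarrow> real \<times> real) \<Rightarrow> (real \<times> real \<Rightarrow> real \<times> real) \<Rightarrow> (real \<times> real \<Rightarrow> real \<times> real)
   \<Rightarrow> real \<times> real \<Rightarrow> real" where
  "kossowski E F G X Y Z p =
    (let ip = (\<lambda>A B q. metric_form E F G q (A q) (B q)); g = metric_form E F G p in
     (1/2) * (dirderiv X (ip Y Z) p + dirderiv Y (ip X Z) p - dirderiv Z (ip X Y) p
        + g (lie_bracket X Y p) (Z p) - g (lie_bracket X Z p) (Y p) - g (lie_bracket Y Z p) (X p)))"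

definition admissible ::
  "(real \<times> real) set \<Rightarrow> (real \<times> real \<Rightarrow> real) \<Rightarrow> (real \<times> real \<Rightarrow> real) \<Rightarrow> (real \<times> real \<Rightarrow> real) \<Rightarrow> bool" where
  "admissible U E F G \<longleftrightarrow>
     (\<forall>p\<in>U. singular_point E F G p \<longrightarrow>
        (\<forall>V1 V2 V3. smooth_on U V1 \<longrightarrow> smooth_on U V2 \<longrightarrow> smooth_on U V3 \<longrightarrow>
           V3 p \<in> null_space E F G p \<longrightarrow> kossowski E F G V1 V2 V3 p = 0))"

definition partial_u :: "(real \<times> real \<Rightarrow> real) \<Rightarrow> real \<times> real \<Rightarrow> real" where
  "partial_u f q = frechet_derivative f (at q) (1, 0)"

definition partial_v :: "(real \<times> real \<Rightarrow> real) \<Rightarrow> real \<times> real \<Rightarrow> real" where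
  "partial_v f q = frechet_derivative f (at q) (0, 1)"

definition intrinsic_cross_cap ::
  "(real \<times> real) set \<Rightarrow> (real \<times> real \<Rightarrow> real) \<Rightarrow> (real \<times> real \<Rightarrow> real) \<Rightarrow> (real \<times> real \<Rightarrow> real) \<Rightarrow> real \<times> real \<Rightarrow> bool" where
  "intrinsic_cross_cap U E F G p \<longleftrightarrow> p \<in> U \<and> singular_point E F G p \<and>
     (let \<delta> = (\<lambda>q. E q * G q - (F q)\<^sup>2) in
        partial_u (partial_u \<delta>) p * partial_v (partial_v \<delta>) p - (partial_u (partial_v \<delta>) p)\<^sup>2 \<noteq> 0)"

end

theory Submission
  imports Defs
begin

text \<open>With \<open>\<delta> = EG - F\<^sup>2\<close>, positive semi-definiteness makes \<open>\<delta> \<ge> 0\<close>, and the singular points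
  are exactly the zeros of \<open>\<delta>\<close>. Being minima, they are critical points of \<open>\<delta>\<close>; since the Hessian
  of \<open>\<delta>\<close> at \<open>p\<close> is nondegenerate, the gradient of \<open>\<delta>\<close> has an injective derivative at \<open>p\<close> and
  hence no other zero near \<open>p\<close>. The null space at a singular point is one-dimensional unless
  \<open>E, F, G\<close> all vanish at \<open>p\<close>; but then \<open>E\<close> and \<open>G\<close> have a minimum at \<open>p\<close>, their differentials
  vanish, and the Hessian of \<open>\<delta>\<close> at \<open>p\<close> reduces to \<open>-2 dF \<otimes> dF\<close>, which has rank at most one.\<close>

lemma metric_form_Pair [simp]:
  "metric_form E F G q (x1, x2) (y1, y2) = E q * x1 * y1 + F q * (x1 * y2 + x2 * y1) + G q * x2 * y2"
  by (simp add: metric_form_def)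

lemma psd_metric_form_coeffs:
  assumes psd: "\<forall>w. metric_form E F G q w w \<ge> 0"
  shows "E q \<ge> 0" "G q \<ge> 0" "E q * G q - (F q)\<^sup>2 \<ge> 0"
proof -
  show E: "E q \<ge> 0" using psd[rule_format, of "(1, 0)"] by simp
  show G: "G q \<ge> 0" using psd[rule_format, of "(0, 1)"] by simp
  have "E q * (E q * G q - (F q)\<^sup>2) \<ge> 0" using psd[rule_format, of "(F q, - E q)"]
    by (simp add: power2_eq_square algebra_simps)
  moreover have "G q * (E q * G q - (F q)\<^sup>2) \<ge> 0" using psd[rule_format, of "(G q, - F q)"]
    by (simp add: power2_eq_square algebra_simps)
  moreover have "E q - 2 * (F q)\<^sup>2 + G q * (F q)\<^sup>2 \<ge> 0" using psd[rule_format, of "(1, - F q)"]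
    by (simp add: power2_eq_square algebra_simps)
  ultimately show "E q * G q - (F q)\<^sup>2 \<ge> 0"
    using E G by (cases "E q > 0 \<or> G q > 0") (auto simp: zero_le_mult_iff)
qed

lemma singular_point_iff_det_zero:
  assumes psd: "\<forall>w. metric_form E F G q w w \<ge> 0"
  shows "singular_point E F G q \<longleftrightarrow> E q * G q - (F q)\<^sup>2 = 0"
proof
  assume "singular_point E F G q"
  then obtain x y where xy: "(x, y) \<noteq> (0 :: real \<times> real)" "metric_form E F G q (x, y) (x, y) \<le> 0"
    unfolding singular_point_def by (auto simp: not_less)
  show "E q * G q - (F q)\<^sup>2 = 0"
  proof (rule ccontr)
    assume "E q * G q - (F q)\<^sup>2 \<noteq> 0"
    with psd_metric_form_coeffs[OF psd] have det: "E q * G q - (F q)\<^sup>2 > 0" and "E q > 0"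
      by (auto simp: less_le)
    have "E q * metric_form E F G q (x, y) (x, y) = (E q * x + F q * y)\<^sup>2 + (E q * G q - (F q)\<^sup>2) * y\<^sup>2"
      by (simp add: power2_eq_square algebra_simps)
    moreover have "E q * metric_form E F G q (x, y) (x, y) \<le> 0"
      using xy(2) \<open>E q > 0\<close> by (simp add: mult_nonneg_nonpos)
    ultimately have "y = 0" "E q * x + F q * y = 0"
      using det by (smt (verit) zero_le_power2 mult_pos_pos power2_less_0 power_eq_0_iff mult_eq_0_iff)+
    with \<open>E q > 0\<close> xy(1) show False by (simp add: zero_prod_def)
  qed
next
  assume det: "E q * G q - (F q)\<^sup>2 = 0"
  define w where "w = (if E q = 0 then (1, 0) else (F q, - E q))"
  have "w \<noteq> 0" "metric_form E F G q w w = 0"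
    using det by (auto simp: w_def zero_prod_def power2_eq_square algebra_simps)
  then show "singular_point E F G q"
    unfolding singular_point_def by (metis less_irrefl)
qed

lemma dim_null_space_eq_1:
  assumes det: "E q * G q - (F q)\<^sup>2 = 0" and nonzero: "\<not> (E q = 0 \<and> F q = 0 \<and> G q = 0)"
  shows "dim (null_space E F G q) = 1"
proof -
  define n where "n = (if E q = 0 then (1, 0) else (F q, - E q))"
  have "n \<noteq> 0" by (simp add: n_def zero_prod_def)
  moreover have "null_space E F G q = span {n}"
  proof (intro set_eqI iffI)
    fix v assume "v \<in> null_space E F G q"
    then have "metric_form E F G q v (1, 0) = 0" "metric_form E F G q v (0, 1) = 0"
      by (simp_all add: null_space_def)
    moreover obtain x y where v: "v = (x, y)" by (cases v)
    ultimately have eqs: "E q * x + F q * y = 0" "F q * x + G q * y = 0"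
      by (simp_all add: algebra_simps)
    have "v = (if E q = 0 then x else - y / E q) *\<^sub>R n"
      using eqs det nonzero by (auto simp: v n_def field_simps power2_eq_square)
    then show "v \<in> span {n}" by (metis span_base span_scale singletonI)
  next
    fix v assume "v \<in> span {n}"
    then obtain c where v: "v = c *\<^sub>R n" by (auto simp: span_singleton)
    have "F q * F q = E q * G q" using det by (simp add: power2_eq_square)
    then show "v \<in> null_space E F G q"
      by (auto simp: null_space_def v n_def metric_form_def algebra_simps)
  qed
  ultimately show ?thesis by simp
qed

lemma linear_Pair_coords:
  fixes L :: "real \<times> real \<Rightarrow> real"
  assumes "linear L"
  shows "L (s, t) = s * L (1, 0) + t * L (0, 1)"
proof -
  have "L (s, t) = L (s *\<^sub>R (1, 0) + t *\<^sub>R (0, 1))" by simp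
  also have "\<dots> = s * L (1, 0) + t * L (0, 1)"
    by (simp only: linear_add[OF assms] linear_scale[OF assms] real_scaleR_def)
  finally show ?thesis .
qed

lemma inj_linear_Pair_det:
  fixes A B :: "real \<times> real \<Rightarrow> real"
  assumes A: "linear A" and B: "linear B" and det: "A (1, 0) * B (0, 1) - A (0, 1) * B (1, 0) \<noteq> 0"
  shows "inj (\<lambda>h. (A h, B h))"
proof -
  have "linear (\<lambda>h. (A h, B h))"
    using A B by (simp add: linear_iff)
  moreover have "h = 0" if "A h = 0" "B h = 0" for h
  proof -
    obtain s t where h: "h = (s, t)" by (cases h)
    let ?d = "A (1, 0) * B (0, 1) - A (0, 1) * B (1, 0)"
    have eA: "s * A (1, 0) + t * A (0, 1) = 0" and eB: "s * B (1, 0) + t * B (0, 1) = 0"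
      using that unfolding h linear_Pair_coords[OF A, of s t] linear_Pair_coords[OF B, of s t] .
    have "s * ?d = B (0, 1) * (s * A (1, 0) + t * A (0, 1)) - A (0, 1) * (s * B (1, 0) + t * B (0, 1))"
      "t * ?d = A (1, 0) * (s * B (1, 0) + t * B (0, 1)) - B (1, 0) * (s * A (1, 0) + t * A (0, 1))"
      by (simp_all add: algebra_simps)
    then have "s * ?d = 0" "t * ?d = 0" unfolding eA eB by simp_all
    then show "h = 0" using det by (simp add: h zero_prod_def)
  qed
  ultimately show ?thesis
    by (simp add: linear_injective_0 zero_prod_def)
qed

lemma has_derivative_isolated_preimage:
  fixes g :: "'a::real_normed_vector \<Rightarrow> 'b::euclidean_space"
  assumes g: "(g has_derivative L) (at p)" and inj: "inj L"
  shows "\<exists>e>0. \<forall>q. q \<noteq> p \<and> dist q p < e \<longrightarrow> g q \<noteq> g p"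
proof -
  obtain c where c: "c > 0" "\<And>x. c * norm x \<le> norm (L x)"
    using linear_inj_bounded_below_pos[OF has_derivative_linear[OF g] inj] by blast
  obtain e where e: "e > 0"
    "\<And>q. norm (q - p) < e \<Longrightarrow> norm (g q - g p - L (q - p)) \<le> c / 2 * norm (q - p)"
    using g c(1) unfolding has_derivative_at_alt by (meson half_gt_zero)
  have "g q \<noteq> g p" if "q \<noteq> p" "dist q p < e" for q
  proof
    assume "g q = g p"
    then have "norm (L (q - p)) \<le> c / 2 * norm (q - p)"
      using e(2)[of q] that(2) by (simp add: dist_norm)
    moreover have "0 < c * norm (q - p)" using c(1) that(1) by simp
    ultimately show False using c(2)[of "q - p"] by linarith
  qed
  with e(1) show ?thesis by blast
qed

lemma has_real_derivative_along_line:
  fixes f :: "'a::real_normed_vector \<Rightarrow> real"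
  assumes "f differentiable at (x + t *\<^sub>R a)"
  shows "((\<lambda>s. f (x + s *\<^sub>R a)) has_real_derivative frechet_derivative f (at (x + t *\<^sub>R a)) a) (at t)"
proof -
  let ?D = "frechet_derivative f (at (x + t *\<^sub>R a))"
  have f: "(f has_derivative ?D) (at (x + t *\<^sub>R a))"
    using assms frechet_derivative_works by blast
  have "((\<lambda>s. x + s *\<^sub>R a) has_derivative (\<lambda>s. s *\<^sub>R a)) (at t)"
    by (auto intro!: derivative_eq_intros)
  from has_derivative_compose[OF this f]
  have "((\<lambda>s. f (x + s *\<^sub>R a)) has_derivative (\<lambda>s. ?D (s *\<^sub>R a))) (at t)" .
  moreover have "?D (s *\<^sub>R a) = ?D a * s" for s
    using linear_scale[OF has_derivative_linear[OF f]] by simp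
  ultimately show ?thesis by (simp add: has_field_derivative_def)
qed

lemma second_difference_mvt_bound:
  fixes f :: "'a::real_normed_vector \<Rightarrow> real"
  assumes h: "0 < h" and df: "\<forall>q\<in>S. f differentiable at q" and linA: "linear A"
    and square: "\<And>t s. 0 \<le> t \<Longrightarrow> t \<le> h \<Longrightarrow> 0 \<le> s \<Longrightarrow> s \<le> h \<Longrightarrow> p + t *\<^sub>R a + s *\<^sub>R b \<in> S"
    and dev: "\<And>t s. 0 \<le> t \<Longrightarrow> t \<le> h \<Longrightarrow> 0 \<le> s \<Longrightarrow> s \<le> h \<Longrightarrow>
      \<bar>frechet_derivative f (at (p + t *\<^sub>R a + s *\<^sub>R b)) a - frechet_derivative f (at p) a
        - A (t *\<^sub>R a + s *\<^sub>R b)\<bar> \<le> K"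
  shows "\<bar>f (p + h *\<^sub>R a + h *\<^sub>R b) - f (p + h *\<^sub>R a) - f (p + h *\<^sub>R b) + f p - h\<^sup>2 * A b\<bar> \<le> h * (2 * K)"
proof -
  define Da where "Da y = frechet_derivative f (at y) a" for y
  define \<phi> where "\<phi> t = f (p + h *\<^sub>R b + t *\<^sub>R a) - f (p + t *\<^sub>R a)" for t
  have d\<phi>: "(\<phi> has_real_derivative Da (p + h *\<^sub>R b + t *\<^sub>R a) - Da (p + t *\<^sub>R a)) (at t)"
    if "0 \<le> t" "t \<le> h" for t
  proof -
    have swap: "p + t *\<^sub>R a + h *\<^sub>R b = p + h *\<^sub>R b + t *\<^sub>R a"
      by (simp only: add.assoc add.commute[of "t *\<^sub>R a"])
    have "p + h *\<^sub>R b + t *\<^sub>R a \<in> S"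
      using square[OF that, of h] h unfolding swap by simp
    then have "((\<lambda>s. f (p + h *\<^sub>R b + s *\<^sub>R a)) has_real_derivative Da (p + h *\<^sub>R b + t *\<^sub>R a)) (at t)"
      unfolding Da_def using df by (intro has_real_derivative_along_line) simp
    moreover have "p + t *\<^sub>R a \<in> S"
      using square[OF that, of 0] h by simp
    then have "((\<lambda>s. f (p + s *\<^sub>R a)) has_real_derivative Da (p + t *\<^sub>R a)) (at t)"
      unfolding Da_def using df by (intro has_real_derivative_along_line) simp
    ultimately show ?thesis
      unfolding \<phi>_def by (rule DERIV_diff)
  qed
  obtain z where z: "0 < z" "z < h"
    and mvt: "\<phi> h - \<phi> 0 = (h - 0) * (Da (p + h *\<^sub>R b + z *\<^sub>R a) - Da (p + z *\<^sub>R a))"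
    using MVT2[OF h d\<phi>] by blast
  have "A (z *\<^sub>R a + h *\<^sub>R b) - A (z *\<^sub>R a + 0 *\<^sub>R b) = h * A b"
    using linear_add[OF linA] linear_scale[OF linA] by simp
  then have "\<bar>Da (p + h *\<^sub>R b + z *\<^sub>R a) - Da (p + z *\<^sub>R a) - h * A b\<bar> \<le> 2 * K"
    using dev[of z h] dev[of z 0] z h by (simp add: Da_def add_ac)
  then have "\<bar>\<phi> h - \<phi> 0 - h\<^sup>2 * A b\<bar> \<le> h * (2 * K)"
    unfolding mvt diff_zero power2_eq_square
    by (metis abs_mult abs_of_pos h mult.assoc mult_left_mono less_imp_le right_diff_distrib)
  then show ?thesis
    by (simp add: \<phi>_def add_ac)
qed

lemma second_difference_estimate:
  fixes f :: "'a::real_normed_vector \<Rightarrow> real"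
  assumes S: "open S" "p \<in> S" and df: "\<forall>q\<in>S. f differentiable at q"
    and dA: "((\<lambda>q. frechet_derivative f (at q) a) has_derivative A) (at p)" and \<epsilon>: "\<epsilon> > 0"
  shows "\<forall>\<^sub>F h in at_right 0.
    \<bar>f (p + h *\<^sub>R a + h *\<^sub>R b) - f (p + h *\<^sub>R a) - f (p + h *\<^sub>R b) + f p - h\<^sup>2 * A b\<bar> \<le> \<epsilon> * h\<^sup>2"
proof -
  define Da where "Da y = frechet_derivative f (at y) a" for y
  define M where "M = norm a + norm b"
  define \<eta> where "\<eta> = \<epsilon> / (2 * M + 1)"
  have M: "M \<ge> 0" by (simp add: M_def)
  have \<eta>: "\<eta> > 0" "2 * \<eta> * M \<le> \<epsilon>"
    using \<epsilon> M by (auto simp: \<eta>_def field_simps)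
  obtain d where d: "d > 0" and
    approx: "\<And>y. norm (y - p) < d \<Longrightarrow> \<bar>Da y - Da p - A (y - p)\<bar> \<le> \<eta> * norm (y - p)"
    using dA \<eta>(1) unfolding has_derivative_at_alt Da_def by (metis real_norm_def)
  obtain r where r: "r > 0" "ball p r \<subseteq> S" using S open_contains_ball by blast
  have bound: "\<bar>f (p + h *\<^sub>R a + h *\<^sub>R b) - f (p + h *\<^sub>R a) - f (p + h *\<^sub>R b) + f p - h\<^sup>2 * A b\<bar>
      \<le> \<epsilon> * h\<^sup>2" if h: "0 < h" "h * M < min d r" for h
  proof -
    have near: "norm (p + t *\<^sub>R a + s *\<^sub>R b - p) \<le> h * M"
      if "0 \<le> t" "t \<le> h" "0 \<le> s" "s \<le> h" for t s
    proof -
      have "norm (p + t *\<^sub>R a + s *\<^sub>R b - p) \<le> t * norm a + s * norm b"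
        using norm_triangle_ineq[of "t *\<^sub>R a" "s *\<^sub>R b"] that by simp
      also have "\<dots> \<le> h * M"
        using that by (simp add: M_def distrib_left add_mono mult_right_mono)
      finally show ?thesis .
    qed
    have "\<bar>f (p + h *\<^sub>R a + h *\<^sub>R b) - f (p + h *\<^sub>R a) - f (p + h *\<^sub>R b) + f p - h\<^sup>2 * A b\<bar>
        \<le> h * (2 * (\<eta> * (h * M)))"
    proof (rule second_difference_mvt_bound[OF h(1) df has_derivative_linear[OF dA]])
      fix t s assume ts: "0 \<le> t" "t \<le> h" "0 \<le> s" "s \<le> h"
      have n: "norm (p + t *\<^sub>R a + s *\<^sub>R b - p) < min d r"
        using near[OF ts] h(2) by linarith
      then have "p + t *\<^sub>R a + s *\<^sub>R b \<in> ball p r"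
        unfolding mem_ball dist_norm norm_minus_commute[of p]
        by (simp only: min_less_iff_conj)
      then show "p + t *\<^sub>R a + s *\<^sub>R b \<in> S"
        using r(2) by blast
      have "\<bar>Da (p + t *\<^sub>R a + s *\<^sub>R b) - Da p - A (t *\<^sub>R a + s *\<^sub>R b)\<bar>
          \<le> \<eta> * norm (p + t *\<^sub>R a + s *\<^sub>R b - p)"
        using approx[of "p + t *\<^sub>R a + s *\<^sub>R b"] n by (simp add: add.assoc)
      also have "\<dots> \<le> \<eta> * (h * M)"
        using near[OF ts] \<eta>(1) by simp
      finally show "\<bar>frechet_derivative f (at (p + t *\<^sub>R a + s *\<^sub>R b)) a - frechet_derivative f (at p) a
          - A (t *\<^sub>R a + s *\<^sub>R b)\<bar> \<le> \<eta> * (h * M)"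
        by (simp add: Da_def)
    qed
    also have "\<dots> \<le> \<epsilon> * h\<^sup>2"
      using \<eta>(2) h(1) by (simp add: power2_eq_square mult_right_mono mult.commute mult.left_commute)
    finally show ?thesis .
  qed
  have "\<exists>c>0. \<forall>h>0. h < c \<longrightarrow> h * M < min d r"
  proof (intro exI conjI allI impI)
    show "min d r / (M + 1) > 0" using d r M by simp
    fix h assume "0 < h" "h < min d r / (M + 1)"
    then have "h * (M + 1) < min d r" using M by (simp add: field_simps)
    then show "h * M < min d r" using \<open>0 < h\<close> by (simp add: distrib_left)
  qed
  then show ?thesis
    unfolding eventually_at_right_field using bound by fastforce
qed

lemma directional_derivatives_commute:
  fixes f :: "'a::real_normed_vector \<Rightarrow> real"
  assumes S: "open S" "p \<in> S" and df: "\<forall>q\<in>S. f differentiable at q"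
    and dA: "((\<lambda>q. frechet_derivative f (at q) a) has_derivative A) (at p)"
    and dB: "((\<lambda>q. frechet_derivative f (at q) b) has_derivative B) (at p)"
  shows "A b = B a"
proof -
  have swap: "f (p + h *\<^sub>R b + h *\<^sub>R a) - f (p + h *\<^sub>R b) - f (p + h *\<^sub>R a) + f p
      = f (p + h *\<^sub>R a + h *\<^sub>R b) - f (p + h *\<^sub>R a) - f (p + h *\<^sub>R b) + f p" for h
    by (simp add: add.assoc add.commute[of "h *\<^sub>R a"])
  have "\<bar>A b - B a\<bar> \<le> 2 * \<epsilon>" if \<epsilon>: "\<epsilon> > 0" for \<epsilon>
  proof -
    let ?\<Delta> = "\<lambda>h. f (p + h *\<^sub>R a + h *\<^sub>R b) - f (p + h *\<^sub>R a) - f (p + h *\<^sub>R b) + f p"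
    note eA = second_difference_estimate[OF S df dA \<epsilon>, of b]
    note eB = second_difference_estimate[OF S df dB \<epsilon>, of a, unfolded swap]
    obtain h where h: "0 < h" "\<bar>?\<Delta> h - h\<^sup>2 * A b\<bar> \<le> \<epsilon> * h\<^sup>2"
      "\<bar>?\<Delta> h - h\<^sup>2 * B a\<bar> \<le> \<epsilon> * h\<^sup>2"
      using eventually_happens'[OF _ eventually_conj[OF eventually_at_right_less eventually_conj[OF eA eB]]]
      by auto
    have "h\<^sup>2 * \<bar>A b - B a\<bar> = \<bar>h\<^sup>2 * A b - h\<^sup>2 * B a\<bar>"
      by (simp add: abs_mult flip: right_diff_distrib)
    also have "\<dots> \<le> 2 * (\<epsilon> * h\<^sup>2)"
      using h(2,3) unfolding abs_le_iff by linarith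
    also have "\<dots> = h\<^sup>2 * (2 * \<epsilon>)" by simp
    finally show ?thesis
      using mult_le_cancel_left_pos[of "h\<^sup>2"] h(1) by simp
  qed
  then have "\<bar>A b - B a\<bar> \<le> 0 + e" if "e > 0" for e
    using that by (metis add_0 half_gt_zero mult_2 field_sum_of_halves)
  then show ?thesis
    using field_le_epsilon[of "\<bar>A b - B a\<bar>" 0] by simp
qed

lemma frechet_derivative_zero_at_minimum:
  fixes f :: "'a::real_normed_vector \<Rightarrow> real"
  assumes "open U" "q \<in> U" "\<forall>y\<in>U. f q \<le> f y" "f differentiable at q"
  shows "frechet_derivative f (at q) = (\<lambda>h. 0)"
proof (rule has_derivative_local_min)
  show "(f has_derivative frechet_derivative f (at q)) (at q)"
    using assms(4) frechet_derivative_works by blast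
  show "\<forall>\<^sub>F y in at q. f q \<le> f y"
    unfolding eventually_at_topological using assms(1-3) by blast
qed

lemma smooth_on_differentiable_at:
  assumes "smooth_on U f" "open U" "q \<in> U"
  shows "f differentiable at q" "(\<lambda>x. frechet_derivative f (at x) w) differentiable at q"
proof -
  have "C_k_on (Suc (Suc 0)) U f" using assms(1) smooth_on_def by blast
  then have "f differentiable_on U" "(\<lambda>x. frechet_derivative f (at x) w) differentiable_on U"
    by (simp_all only: C_k_on.simps)
  then show "f differentiable at q" "(\<lambda>x. frechet_derivative f (at x) w) differentiable at q"
    using assms(2,3) differentiable_on_eq_differentiable_at by blast+
qed

lemma frechet_derivative_mult_at:
  fixes f g :: "'a::real_normed_vector \<Rightarrow> real"
  assumes "f differentiable at x" "g differentiable at x"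
  shows "frechet_derivative (\<lambda>y. f y * g y) (at x) =
    (\<lambda>h. f x * frechet_derivative g (at x) h + frechet_derivative f (at x) h * g x)"
  using assms by (intro frechet_derivative_at[symmetric] has_derivative_mult)
    (simp_all add: frechet_derivative_works[symmetric])

lemma has_derivative_directional_mult:
  fixes f g :: "'a::real_normed_vector \<Rightarrow> real"
  assumes U: "open U" "q \<in> U" and df: "\<forall>x\<in>U. f differentiable at x" and dg: "\<forall>x\<in>U. g differentiable at x"
    and f2: "((\<lambda>x. frechet_derivative f (at x) w) has_derivative f2) (at q)"
    and g2: "((\<lambda>x. frechet_derivative g (at x) w) has_derivative g2) (at q)"
  shows "((\<lambda>x. frechet_derivative (\<lambda>y. f y * g y) (at x) w) has_derivative
    (\<lambda>h. f q * g2 h + frechet_derivative f (at q) h * frechet_derivative g (at q) w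
       + (frechet_derivative f (at q) w * frechet_derivative g (at q) h + f2 h * g q))) (at q)"
proof -
  have "(f has_derivative frechet_derivative f (at q)) (at q)"
    "(g has_derivative frechet_derivative g (at q)) (at q)"
    using df dg U(2) frechet_derivative_works by blast+
  from has_derivative_add[OF has_derivative_mult[OF this(1) g2] has_derivative_mult[OF f2 this(2)]]
  show ?thesis
    by (rule has_derivative_transform_within_open[OF _ U]) (simp add: frechet_derivative_mult_at df dg)
qed

lemma has_derivative_directional_gram_det:
  fixes E F G :: "real \<times> real \<Rightarrow> real" and w :: "real \<times> real"
  assumes U: "open U" "q \<in> U" and sE: "smooth_on U E" and sF: "smooth_on U F" and sG: "smooth_on U G"
  defines "D \<equiv> \<lambda>f. frechet_derivative f (at q)"
    and "D2 \<equiv> \<lambda>f. frechet_derivative (\<lambda>x. frechet_derivative f (at x) w) (at q)"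
  shows "((\<lambda>x. frechet_derivative (\<lambda>y. E y * G y - (F y)\<^sup>2) (at x) w) has_derivative
    (\<lambda>h. E q * D2 G h + D E h * D G w + (D E w * D G h + D2 E h * G q)
       - (F q * D2 F h + D F h * D F w + (D F w * D F h + D2 F h * F q)))) (at q)"
proof -
  have d1: "\<forall>x\<in>U. f differentiable at x" if "smooth_on U f" for f :: "real \<times> real \<Rightarrow> real"
    using smooth_on_differentiable_at(1)[OF that U(1)] by blast
  have d2: "((\<lambda>x. frechet_derivative f (at x) w) has_derivative D2 f) (at q)"
    if "smooth_on U f" for f :: "real \<times> real \<Rightarrow> real"
    unfolding D2_def using smooth_on_differentiable_at(2)[OF that U, of w] frechet_derivative_works
    by blast
  have split: "frechet_derivative (\<lambda>y. E y * G y - (F y)\<^sup>2) (at x) w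
      = frechet_derivative (\<lambda>y. E y * G y) (at x) w - frechet_derivative (\<lambda>y. F y * F y) (at x) w"
    if "x \<in> U" for x
  proof -
    have "((\<lambda>y. E y * G y - (F y)\<^sup>2) has_derivative
        (\<lambda>h. frechet_derivative (\<lambda>y. E y * G y) (at x) h - frechet_derivative (\<lambda>y. F y * F y) (at x) h)) (at x)"
      unfolding power2_eq_square using d1[OF sE] d1[OF sF] d1[OF sG] that
      by (intro has_derivative_diff) (simp_all add: frechet_derivative_works[symmetric])
    then show ?thesis by (simp add: frechet_derivative_at[symmetric])
  qed
  note EG = has_derivative_directional_mult[OF U d1[OF sE] d1[OF sG] d2[OF sE] d2[OF sG]]
  note FF = has_derivative_directional_mult[OF U d1[OF sF] d1[OF sF] d2[OF sF] d2[OF sF]]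
  show ?thesis
    unfolding D_def
    by (rule has_derivative_transform_within_open[OF has_derivative_diff[OF EG FF] U split[symmetric]])
qed

definition hessian_det :: "(real \<times> real \<Rightarrow> real) \<Rightarrow> real \<times> real \<Rightarrow> real" where
  "hessian_det f p = partial_u (partial_u f) p * partial_v (partial_v f) p - (partial_u (partial_v f) p)\<^sup>2"

lemma isolated_zero_of_nonneg_nondegenerate:
  fixes \<delta> :: "real \<times> real \<Rightarrow> real"
  assumes U: "open U" "p \<in> U" and nonneg: "\<forall>q\<in>U. 0 \<le> \<delta> q" and "\<delta> p = 0"
    and d\<delta>: "\<forall>q\<in>U. \<delta> differentiable at q"
    and du: "partial_u \<delta> differentiable at p" and dv: "partial_v \<delta> differentiable at p"
    and hess: "hessian_det \<delta> p \<noteq> 0"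
  shows "\<exists>e>0. \<forall>q\<in>U. q \<noteq> p \<and> dist q p < e \<longrightarrow> \<delta> q \<noteq> 0"
proof -
  let ?grad = "\<lambda>q. (partial_u \<delta> q, partial_v \<delta> q)"
  define A where "A = frechet_derivative (partial_u \<delta>) (at p)"
  define B where "B = frechet_derivative (partial_v \<delta>) (at p)"
  have hA: "(partial_u \<delta> has_derivative A) (at p)" and hB: "(partial_v \<delta> has_derivative B) (at p)"
    using du dv frechet_derivative_works by (auto simp: A_def B_def)
  have "A (0, 1) = B (1, 0)"
    using directional_derivatives_commute[OF U d\<delta>] hA hB
    unfolding partial_u_def[abs_def] partial_v_def[abs_def] by blast
  then have "inj (\<lambda>h. (A h, B h))"
    using hess has_derivative_linear[OF hA] has_derivative_linear[OF hB]
    by (intro inj_linear_Pair_det)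
      (simp_all add: hessian_det_def A_def B_def partial_u_def partial_v_def power2_eq_square)
  then obtain e where "e > 0" and e: "\<forall>q. q \<noteq> p \<and> dist q p < e \<longrightarrow> ?grad q \<noteq> ?grad p"
    using has_derivative_isolated_preimage[OF has_derivative_Pair[OF hA hB]] by blast
  have critical: "?grad q = 0" if "q \<in> U" "\<delta> q = 0" for q
    using frechet_derivative_zero_at_minimum[OF U(1) that(1) _ d\<delta>[rule_format, OF that(1)]]
      nonneg that(2) by (simp add: partial_u_def partial_v_def zero_prod_def)
  show ?thesis
    using \<open>e > 0\<close> e critical[OF U(2) \<open>\<delta> p = 0\<close>] critical by metis
qed

lemma hessian_det_gram_det_eq_0:
  fixes E F G :: "real \<times> real \<Rightarrow> real"
  assumes U: "open U" "p \<in> U" and sE: "smooth_on U E" and sF: "smooth_on U F" and sG: "smooth_on U G"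
    and nonneg: "\<forall>q\<in>U. 0 \<le> E q" "\<forall>q\<in>U. 0 \<le> G q"
    and zero: "E p = 0" "F p = 0" "G p = 0"
  shows "hessian_det (\<lambda>q. E q * G q - (F q)\<^sup>2) p = 0"
proof -
  let ?DF = "frechet_derivative F (at p)"
  have "frechet_derivative E (at p) = (\<lambda>h. 0)"
    using frechet_derivative_zero_at_minimum[OF U _ smooth_on_differentiable_at(1)[OF sE U]]
      nonneg(1) zero(1) by simp
  moreover have "frechet_derivative G (at p) = (\<lambda>h. 0)"
    using frechet_derivative_zero_at_minimum[OF U _ smooth_on_differentiable_at(1)[OF sG U]]
      nonneg(2) zero(3) by simp
  \<comment> \<open>so the second derivative of \<open>EG - F\<^sup>2\<close> at \<open>p\<close> reduces to \<open>-2 dF \<otimes> dF\<close>\<close>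
  ultimately have "frechet_derivative (\<lambda>x. frechet_derivative (\<lambda>y. E y * G y - (F y)\<^sup>2) (at x) w) (at p)
      = (\<lambda>h. - (?DF h * ?DF w + ?DF w * ?DF h))" for w
    using frechet_derivative_at[OF has_derivative_directional_gram_det[OF U sE sF sG, of w]] zero
    by simp
  then show ?thesis
    unfolding hessian_det_def partial_u_def[abs_def] partial_v_def[abs_def]
    by (simp add: power2_eq_square algebra_simps)
qed

theorem proposition4p3:
  fixes U :: "(real \<times> real) set" and E F G :: "real \<times> real \<Rightarrow> real" and p :: "real \<times> real"
  assumes "smooth_psd_metric U E F G"
    and "admissible U E F G"
    and "intrinsic_cross_cap U E F G p"
  shows "(\<exists>e>0. \<forall>q\<in>U. q \<noteq> p \<and> dist q p < e \<longrightarrow> \<not> singular_point E F G q)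
         \<and> dim (null_space E F G p) = 1"
proof -
  define \<delta> where "\<delta> q = E q * G q - (F q)\<^sup>2" for q
  have U: "open U" and sE: "smooth_on U E" and sF: "smooth_on U F" and sG: "smooth_on U G"
    and psd: "\<And>q. q \<in> U \<Longrightarrow> \<forall>w. metric_form E F G q w w \<ge> 0"
    using assms(1) unfolding smooth_psd_metric_def by auto
  have p: "p \<in> U" "singular_point E F G p" and hess: "hessian_det \<delta> p \<noteq> 0"
    using assms(3) unfolding intrinsic_cross_cap_def hessian_det_def \<delta>_def[abs_def] by auto
  have singular_iff: "singular_point E F G q \<longleftrightarrow> \<delta> q = 0" if "q \<in> U" for q
    using singular_point_iff_det_zero[OF psd[OF that]] by (simp add: \<delta>_def)
  have "\<exists>e>0. \<forall>q\<in>U. q \<noteq> p \<and> dist q p < e \<longrightarrow> \<delta> q \<noteq> 0"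
  proof (rule isolated_zero_of_nonneg_nondegenerate[OF U p(1) _ _ _ _ _ hess])
    show "\<forall>q\<in>U. 0 \<le> \<delta> q" "\<delta> p = 0"
      using psd_metric_form_coeffs(3)[OF psd] singular_iff p by (auto simp: \<delta>_def)
    show "\<forall>q\<in>U. \<delta> differentiable at q"
      using smooth_on_differentiable_at(1)[OF _ U] sE sF sG
      by (auto intro!: derivative_intros simp: \<delta>_def[abs_def])
    show "partial_u \<delta> differentiable at p" "partial_v \<delta> differentiable at p"
      using has_derivative_directional_gram_det[OF U p(1) sE sF sG] differentiable_def
      unfolding partial_u_def[abs_def] partial_v_def[abs_def] \<delta>_def[abs_def] by blast+
  qed
  moreover have "\<not> (E p = 0 \<and> F p = 0 \<and> G p = 0)"
    using hessian_det_gram_det_eq_0[OF U p(1) sE sF sG] psd_metric_form_coeffs(1,2)[OF psd] hess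
    by (auto simp: \<delta>_def[abs_def])
  ultimately show ?thesis
    using dim_null_space_eq_1 singular_iff p by (auto simp: \<delta>_def)
qed

end
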